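(* Let $G$ be a connected graph with $|G|$ vertices and let $(u,v)\in V_p$. If $r_w(u,v)=\frac{1}{|G|}$ for every $w\in V(G)$, then $d(u,v)$ is odd.
   Context: Graphs are finite, simple and connected; $d(u,v)$ denotes the shortest-path distance and $|G|$ the number of vertices. $V_p$ denotes the set of all unordered pairs $(u,v)$ of distinct vertices. A vertex $x$ resolves the pair $(u,v)$ if $d(x,u)\neq d(x,v)$. For $(u,v)\in V_p$, $R(u,v)$ is the set of all vertices resolving $(u,v)$. The resolving share of a vertex $w$ for $(u,v)$ is $r_w(u,v)=\frac{1}{|R(u,v)|}$ if $w$ resolves $u$ and $v$, and $r_w(u,v)=0$ otherwise. *)

theory Defs
  imports Complex_Main
begin

definition simple_graph :: "'a set \<Rightarrow> ('a \<Rightarrow> 'a \<Rightarrow> bool) \<Rightarrow> bool" where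
  "simple_graph V E \<longleftrightarrow> finite V \<and> V \<noteq> {} \<and>
     (\<forall>x y. E x y \<longrightarrow> x \<in> V \<and> y \<in> V) \<and>
     (\<forall>x y. E x y \<longrightarrow> E y x) \<and> (\<forall>x. \<not> E x x)"

fun walk :: "('a \<Rightarrow> 'a \<Rightarrow> bool) \<Rightarrow> 'a list \<Rightarrow> bool" where
  "walk E [] = False"
| "walk E [x] = True"
| "walk E (x # y # xs) = (E x y \<and> walk E (y # xs))"

definition reachable_in :: "('a \<Rightarrow> 'a \<Rightarrow> bool) \<Rightarrow> 'a \<Rightarrow> 'a \<Rightarrow> nat \<Rightarrow> bool" where
  "reachable_in E x y n \<longleftrightarrow>
     (\<exists>p. walk E p \<and> hd p = x \<and> last p = y \<and> length p = Suc n)"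

definition connected_graph :: "'a set \<Rightarrow> ('a \<Rightarrow> 'a \<Rightarrow> bool) \<Rightarrow> bool" where
  "connected_graph V E \<longleftrightarrow> simple_graph V E \<and>
     (\<forall>x\<in>V. \<forall>y\<in>V. \<exists>n. reachable_in E x y n)"

definition graph_dist :: "('a \<Rightarrow> 'a \<Rightarrow> bool) \<Rightarrow> 'a \<Rightarrow> 'a \<Rightarrow> nat" where
  "graph_dist E x y = (LEAST n. reachable_in E x y n)"

definition resolves :: "('a \<Rightarrow> 'a \<Rightarrow> bool) \<Rightarrow> 'a \<Rightarrow> 'a \<Rightarrow> 'a \<Rightarrow> bool" where
  "resolves E x u v \<longleftrightarrow> graph_dist E x u \<noteq> graph_dist E x v"

definition resolving_set :: "'a set \<Rightarrow> ('a \<Rightarrow> 'a \<Rightarrow> bool) \<Rightarrow> 'a \<Rightarrow> 'a \<Rightarrow> 'a set" where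
  "resolving_set V E u v = {x \<in> V. resolves E x u v}"

definition resolving_share :: "'a set \<Rightarrow> ('a \<Rightarrow> 'a \<Rightarrow> bool) \<Rightarrow> 'a \<Rightarrow> 'a \<Rightarrow> 'a \<Rightarrow> real" where
  "resolving_share V E w u v =
     (if resolves E w u v then 1 / real (card (resolving_set V E u v)) else 0)"

end

theory Submission
  imports Defs
begin

text \<open>If d(u,v) = 2h were even, the vertex at distance h from u on a shortest u-v path would be
  at distance exactly h from both u and v (shorter distances would give a shorter u-v path).
  Such a vertex does not resolve (u,v), so its resolving share is 0 rather than 1/|G|.\<close>

lemma walk_append:
  "walk E p \<Longrightarrow> walk E q \<Longrightarrow> last p = hd q \<Longrightarrow> walk E (p @ tl q)"
proof (induction E p rule: walk.induct)
  case (2 E x)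
  then show ?case by (cases q) auto
qed auto

lemma walk_snoc: "walk E (xs @ [y]) \<Longrightarrow> E y z \<Longrightarrow> walk E (xs @ [y, z])"
  by (induction E xs rule: walk.induct) auto

lemma walk_rev: "(\<And>x y. E x y \<Longrightarrow> E y x) \<Longrightarrow> walk E p \<Longrightarrow> walk E (rev p)"
proof (induction E p rule: walk.induct)
  case (3 E x y xs)
  then show ?case using walk_snoc[of E "rev xs" y x] by simp
qed auto

lemma walk_take: "walk E p \<Longrightarrow> walk E (take (Suc n) p)"
proof (induction E p arbitrary: n rule: walk.induct)
  case (3 E x y xs)
  then show ?case by (cases n) auto
qed auto

lemma walk_drop: "walk E p \<Longrightarrow> n < length p \<Longrightarrow> walk E (drop n p)"
proof (induction E p arbitrary: n rule: walk.induct)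
  case (3 E x y xs)
  then show ?case by (cases n) auto
qed auto

lemma walk_last_closed:
  assumes "walk E p" "hd p \<in> V" "\<And>x y. E x y \<Longrightarrow> y \<in> V"
  shows "last p \<in> V"
  using assms by (induction E p rule: walk.induct) auto

lemma reachable_in_closed:
  "reachable_in E x y n \<Longrightarrow> x \<in> V \<Longrightarrow> (\<And>a b. E a b \<Longrightarrow> b \<in> V) \<Longrightarrow> y \<in> V"
  unfolding reachable_in_def using walk_last_closed[of E _ V] by blast

lemma reachable_in_trans:
  assumes "reachable_in E x y a" "reachable_in E y z b"
  shows "reachable_in E x z (a + b)"
proof -
  obtain p q where p: "walk E p" "hd p = x" "last p = y" "length p = Suc a"
    and q: "walk E q" "hd q = y" "last q = z" "length q = Suc b"
    using assms unfolding reachable_in_def by blast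
  have "walk E (p @ tl q)" using walk_append[OF p(1) q(1)] p(3) q(2) by simp
  moreover have "hd (p @ tl q) = x" using p by (cases p) auto
  moreover have "last (p @ tl q) = z" using p q by (cases q) auto
  moreover have "length (p @ tl q) = Suc (a + b)" using p q by simp
  ultimately show ?thesis unfolding reachable_in_def by blast
qed

lemma reachable_in_sym:
  assumes "\<And>x y. E x y \<Longrightarrow> E y x" "reachable_in E x y n"
  shows "reachable_in E y x n"
proof -
  obtain p where "walk E p" "hd p = x" "last p = y" "length p = Suc n"
    using assms(2) unfolding reachable_in_def by blast
  then show ?thesis
    unfolding reachable_in_def
    by (intro exI[of _ "rev p"]) (simp add: walk_rev[OF assms(1)] hd_rev last_rev)
qed

lemma last_take_Suc: "m < length p \<Longrightarrow> last (take (Suc m) p) = p ! m"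
  by (simp add: take_Suc_conv_app_nth)

lemma reachable_in_split:
  assumes "reachable_in E x z n" "m \<le> n"
  obtains y where "reachable_in E x y m" "reachable_in E y z (n - m)"
proof -
  obtain p where p: "walk E p" "hd p = x" "last p = z" "length p = Suc n"
    using assms(1) unfolding reachable_in_def by blast
  have "reachable_in E x (p ! m) m"
    unfolding reachable_in_def
    using p assms(2) walk_take[OF p(1), of m]
    by (intro exI[of _ "take (Suc m) p"]) (auto simp: hd_take last_take_Suc)
  moreover have "reachable_in E (p ! m) z (n - m)"
    unfolding reachable_in_def
    using p assms(2) walk_drop[OF p(1), of m]
    by (intro exI[of _ "drop m p"]) (auto simp: hd_drop_conv_nth)
  ultimately show thesis using that by blast
qed

lemma reachable_in_graph_dist:
  "reachable_in E x y n \<Longrightarrow> reachable_in E x y (graph_dist E x y)"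
  unfolding graph_dist_def by (rule LeastI)

lemma graph_dist_le: "reachable_in E x y n \<Longrightarrow> graph_dist E x y \<le> n"
  unfolding graph_dist_def by (rule Least_le)

lemma graph_dist_triangle:
  assumes "reachable_in E x y a" "reachable_in E y z b"
  shows "graph_dist E x z \<le> graph_dist E x y + graph_dist E y z"
proof -
  have "reachable_in E x z (graph_dist E x y + graph_dist E y z)"
    using reachable_in_trans[OF assms[THEN reachable_in_graph_dist]] .
  then show ?thesis by (rule graph_dist_le)
qed

lemma even_graph_dist_equidistant_vertex:
  assumes "connected_graph V E" "u \<in> V" "v \<in> V" "even (graph_dist E u v)"
  obtains w where "w \<in> V" "graph_dist E w u = graph_dist E w v"
proof -
  have sym: "\<And>x y. E x y \<Longrightarrow> E y x" and closed: "\<And>x y. E x y \<Longrightarrow> y \<in> V"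
    using assms(1) unfolding connected_graph_def simple_graph_def by blast+
  obtain n where "reachable_in E u v n"
    using assms(1-3) unfolding connected_graph_def by blast
  then have shortest: "reachable_in E u v (graph_dist E u v)"
    by (rule reachable_in_graph_dist)
  obtain h where h: "graph_dist E u v = 2 * h" using assms(4) by (auto elim: evenE)
  obtain w where uw: "reachable_in E u w h" and wv: "reachable_in E w v h"
    using reachable_in_split[OF shortest, of h] h by auto
  have wu: "reachable_in E w u h" using reachable_in_sym[OF sym uw] .
  have "graph_dist E u v \<le> graph_dist E u w + graph_dist E w v"
    using graph_dist_triangle[OF uw wv] .
  moreover have "graph_dist E u w \<le> graph_dist E w u"
    using reachable_in_sym[OF sym reachable_in_graph_dist[OF wu]] by (rule graph_dist_le)
  moreover have "graph_dist E w u \<le> h" using wu by (rule graph_dist_le)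
  moreover have "graph_dist E w v \<le> h" using wv by (rule graph_dist_le)
  ultimately have "graph_dist E w u = graph_dist E w v" using h by linarith
  moreover have "w \<in> V" using reachable_in_closed[OF uw assms(2) closed] .
  ultimately show thesis using that by blast
qed

theorem lemma2p11:
  fixes V :: "'a set" and E :: "'a \<Rightarrow> 'a \<Rightarrow> bool" and u v :: 'a
  assumes "connected_graph V E"
    and "u \<in> V" and "v \<in> V" and "u \<noteq> v"
    and "\<forall>w\<in>V. resolving_share V E w u v = 1 / real (card V)"
  shows "odd (graph_dist E u v)"
proof (rule ccontr)
  assume "\<not> odd (graph_dist E u v)"
  then obtain w where "w \<in> V" and "graph_dist E w u = graph_dist E w v"
    using even_graph_dist_equidistant_vertex[OF assms(1-3)] by auto
  then have "resolving_share V E w u v = 0"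
    unfolding resolving_share_def resolves_def by simp
  moreover have "resolving_share V E w u v = 1 / real (card V)"
    using assms(5) \<open>w \<in> V\<close> by blast
  moreover have "card V > 0"
    using assms(1) unfolding connected_graph_def simple_graph_def by (simp add: card_gt_0_iff)
  ultimately show False by simp
qed

end
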